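(* Let $(\mathcal{X},\rho)$ be a metric space and let $\mu_s,\mu_t$ be Borel probability measures on $\mathcal{X}$ with finite first moment. Let $H$ be a class of functions $h:\mathcal{X}\to[0,1]$, and assume every $h\in H$ is $K$-Lipschitz continuous with respect to $\rho$ for some constant $K$. Then for every $h,h'\in H$, $$\epsilon_t(h,h')\le \epsilon_s(h,h')+2K\,W_1(\mu_s,\mu_t).$$
   Context: For a probability measure $\mu$ on $\mathcal{X}$ and functions $h,h':\mathcal{X}\to[0,1]$, define $\epsilon_\mu(h,h')=\mathbb{E}_{x\sim\mu}[|h(x)-h'(x)|]$; write $\epsilon_s=\epsilon_{\mu_s}$ and $\epsilon_t=\epsilon_{\mu_t}$. The (first) Wasserstein distance is $W_1(\mathbb{P},\mathbb{Q})=\inf_{\gamma\in\Gamma(\mathbb{P},\mathbb{Q})}\int\rho(x,y)\,d\gamma(x,y)$, where $\Gamma(\mathbb{P},\mathbb{Q})$ is the set of couplings of $\mathbb{P}$ and $\mathbb{Q}$; by Kantorovich–Rubinstein duality (for separable $\mathcal{X}$) it equals $\sup_{\|f\|_L\le 1}\mathbb{E}_{\mathbb{P}}[f]-\mathbb{E}_{\mathbb{Q}}[f]$, with $\|f\|_L=\sup_{x\ne y}|f(x)-f(y)|/\rho(x,y)$. *)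

theory Defs
  imports "HOL-Probability.Probability"
begin

definition eps :: "'a measure \<Rightarrow> ('a \<Rightarrow> real) \<Rightarrow> ('a \<Rightarrow> real) \<Rightarrow> real" where
  "eps \<mu> h h' = (\<integral>x. \<bar>h x - h' x\<bar> \<partial>\<mu>)"

definition coupling :: "'a measure \<Rightarrow> 'b measure \<Rightarrow> ('a \<times> 'b) measure \<Rightarrow> bool" where
  "coupling P Q \<gamma> \<longleftrightarrow> prob_space \<gamma> \<and> sets \<gamma> = sets (P \<Otimes>\<^sub>M Q)
      \<and> distr \<gamma> P fst = P \<and> distr \<gamma> Q snd = Q"

definition W1 :: "'a::metric_space measure \<Rightarrow> 'a measure \<Rightarrow> real" where
  "W1 P Q = enn2real (INF \<gamma>\<in>{\<gamma>. coupling P Q \<gamma>}. \<integral>\<^sup>+ z. ennreal (dist (fst z) (snd z)) \<partial>\<gamma>)"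

definition finite_first_moment :: "'a::metric_space measure \<Rightarrow> bool" where
  "finite_first_moment \<mu> \<longleftrightarrow> (\<exists>x0. integrable \<mu> (\<lambda>x. dist x x0))"

end

theory Submission
  imports Defs
begin

text \<open>
  The disagreement function \<open>\<bar>h - h'\<bar>\<close> is bounded and \<open>2K\<close>-Lipschitz, and the gap between the
  expectations of a bounded 1-Lipschitz function under two measures is at most the transport
  cost of any coupling of them (the easy half of Kantorovich--Rubinstein duality).  Taking the
  infimum over couplings gives the bound with \<open>W\<^sub>1\<close>; finite first moments make the product
  coupling have finite cost, so this infimum is a genuine real number and not the junk value
  \<open>enn2real \<infinity> = 0\<close>.
\<close>

definition transport_cost :: "('a::metric_space \<times> 'a) measure \<Rightarrow> ennreal" where
  "transport_cost \<gamma> = (\<integral>\<^sup>+ z. ennreal (dist (fst z) (snd z)) \<partial>\<gamma>)"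

lemma W1_eq_INF_transport_cost:
  "W1 P Q = enn2real (INF \<gamma>\<in>{\<gamma>. coupling P Q \<gamma>}. transport_cost \<gamma>)"
  by (simp add: W1_def transport_cost_def)

lemma (in prob_space) distr_pair_snd: "distr (N \<Otimes>\<^sub>M M) M snd = M"
  if "prob_space N"
proof (intro measure_eqI)
  interpret N: prob_space N by fact
  fix A assume A: "A \<in> sets (distr (N \<Otimes>\<^sub>M M) M snd)"
  then have "emeasure (distr (N \<Otimes>\<^sub>M M) M snd) A = emeasure (N \<Otimes>\<^sub>M M) (space N \<times> A)"
    by (auto simp: emeasure_distr space_pair_measure dest: sets.sets_into_space
             intro!: arg_cong2[where f=emeasure])
  with A show "emeasure (distr (N \<Otimes>\<^sub>M M) M snd) A = emeasure M A"
    by (simp add: emeasure_pair_measure_Times N.emeasure_space_1)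
qed simp

lemma coupling_pair_measure:
  assumes "prob_space P" "prob_space Q"
  shows "coupling P Q (P \<Otimes>\<^sub>M Q)"
proof -
  interpret pair_prob_space P Q
    using assms by (simp add: pair_prob_space_def pair_sigma_finite_def prob_space_imp_sigma_finite)
  show ?thesis
    unfolding coupling_def
    using prob_space_axioms prob_space.distr_pair_fst[OF assms(2), of P]
      prob_space.distr_pair_snd[OF assms(2,1)] by simp
qed

lemma
  assumes "coupling P Q \<gamma>"
  shows measurable_fst_coupling: "fst \<in> measurable \<gamma> P"
    and measurable_snd_coupling: "snd \<in> measurable \<gamma> Q"
  using assms measurable_cong_sets[of \<gamma> "P \<Otimes>\<^sub>M Q"] unfolding coupling_def by auto

lemma coupling_transport_cost_finite:
  assumes \<gamma>: "coupling P Q \<gamma>"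
    and "finite_first_moment P" "finite_first_moment Q"
  shows "transport_cost \<gamma> < \<infinity>"
proof -
  obtain x0 x1 where x0: "integrable P (\<lambda>x. dist x x0)" and x1: "integrable Q (\<lambda>x. dist x x1)"
    using assms(2,3) unfolding finite_first_moment_def by blast
  have fst: "fst \<in> measurable \<gamma> P" and snd: "snd \<in> measurable \<gamma> Q"
    using \<gamma> by (rule measurable_fst_coupling, rule measurable_snd_coupling)
  have "prob_space \<gamma>" "distr \<gamma> P fst = P" "distr \<gamma> Q snd = Q"
    using \<gamma> unfolding coupling_def by auto
  have "(\<integral>\<^sup>+ z. ennreal (dist (fst z) x0) \<partial>\<gamma>) = (\<integral>\<^sup>+ x. ennreal (dist x x0) \<partial>P)"
    using nn_integral_distr[OF fst, of "\<lambda>x. ennreal (dist x x0)"] x0 \<open>distr \<gamma> P fst = P\<close> by simp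
  also have "\<dots> < \<infinity>"
    using nn_integral_eq_integral[OF x0] by simp
  finally have fin0: "(\<integral>\<^sup>+ z. ennreal (dist (fst z) x0) \<partial>\<gamma>) < \<infinity>" .
  have "(\<integral>\<^sup>+ z. ennreal (dist (snd z) x1) \<partial>\<gamma>) = (\<integral>\<^sup>+ x. ennreal (dist x x1) \<partial>Q)"
    using nn_integral_distr[OF snd, of "\<lambda>x. ennreal (dist x x1)"] x1 \<open>distr \<gamma> Q snd = Q\<close> by simp
  also have "\<dots> < \<infinity>"
    using nn_integral_eq_integral[OF x1] by simp
  finally have fin1: "(\<integral>\<^sup>+ z. ennreal (dist (snd z) x1) \<partial>\<gamma>) < \<infinity>" .
  have "transport_cost \<gamma>
      \<le> (\<integral>\<^sup>+ z. ennreal (dist (fst z) x0) + (ennreal (dist x0 x1) + ennreal (dist (snd z) x1)) \<partial>\<gamma>)"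
    unfolding transport_cost_def
  proof (rule nn_integral_mono)
    fix z :: "'a \<times> 'a"
    have "dist (fst z) (snd z) \<le> dist (fst z) x0 + (dist x0 x1 + dist (snd z) x1)"
      using dist_triangle[of "fst z" "snd z" x0] dist_triangle[of x0 "snd z" x1]
        dist_commute[of x1 "snd z"] by linarith
    then show "ennreal (dist (fst z) (snd z))
        \<le> ennreal (dist (fst z) x0) + (ennreal (dist x0 x1) + ennreal (dist (snd z) x1))"
      by (simp add: ennreal_plus[symmetric] del: ennreal_plus)
  qed
  also have "\<dots> = (\<integral>\<^sup>+ z. ennreal (dist (fst z) x0) \<partial>\<gamma>)
      + (ennreal (dist x0 x1) * emeasure \<gamma> (space \<gamma>) + (\<integral>\<^sup>+ z. ennreal (dist (snd z) x1) \<partial>\<gamma>))"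
  proof -
    have "(\<lambda>z. ennreal (dist (fst z) x0)) \<in> borel_measurable \<gamma>"
      using measurable_comp[OF fst borel_measurable_integrable[OF x0]] by (simp add: comp_def)
    moreover have "(\<lambda>z. ennreal (dist (snd z) x1)) \<in> borel_measurable \<gamma>"
      using measurable_comp[OF snd borel_measurable_integrable[OF x1]] by (simp add: comp_def)
    ultimately show ?thesis
      by (simp add: nn_integral_add)
  qed
  also have "\<dots> < \<infinity>"
    using fin0 fin1 prob_space.emeasure_space_1[OF \<open>prob_space \<gamma>\<close>] by (simp add: ennreal_mult_less_top)
  finally show ?thesis .
qed

lemma INF_transport_cost_finite:
  assumes "prob_space P" "prob_space Q" "finite_first_moment P" "finite_first_moment Q"
  shows "(INF \<gamma>\<in>{\<gamma>. coupling P Q \<gamma>}. transport_cost \<gamma>) < \<infinity>"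
  using coupling_transport_cost_finite[OF coupling_pair_measure[OF assms(1,2)] assms(3,4)]
    coupling_pair_measure[OF assms(1,2)] by (blast intro: INF_lower le_less_trans)

lemma le_W1I:
  assumes "prob_space P" "prob_space Q" "finite_first_moment P" "finite_first_moment Q"
    and "\<And>\<gamma>. coupling P Q \<gamma> \<Longrightarrow> ennreal c \<le> transport_cost \<gamma>"
  shows "c \<le> W1 P Q"
proof (cases "c \<ge> 0")
  case True
  have "ennreal c \<le> (INF \<gamma>\<in>{\<gamma>. coupling P Q \<gamma>}. transport_cost \<gamma>)"
    using assms(5) by (blast intro: INF_greatest)
  with INF_transport_cost_finite[OF assms(1-4)] True show ?thesis
    using enn2real_mono by (fastforce simp: W1_eq_INF_transport_cost)
next
  case False
  moreover have "0 \<le> W1 P Q"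
    unfolding W1_def by (rule enn2real_nonneg)
  ultimately show ?thesis by linarith
qed

lemma coupling_integral_diff_le_transport_cost:
  fixes f :: "'a::metric_space \<Rightarrow> real"
  assumes \<gamma>: "coupling P Q \<gamma>" and "sets P = sets borel" "sets Q = sets borel"
    and bounded: "\<And>x. \<bar>f x\<bar> \<le> B" and lip: "1-lipschitz_on UNIV f"
  shows "ennreal ((\<integral>x. f x \<partial>Q) - (\<integral>x. f x \<partial>P)) \<le> transport_cost \<gamma>"
proof -
  interpret prob_space \<gamma>
    using \<gamma> unfolding coupling_def by simp
  have fst: "fst \<in> measurable \<gamma> P" and snd: "snd \<in> measurable \<gamma> Q"
    using \<gamma> by (rule measurable_fst_coupling, rule measurable_snd_coupling)
  have "f \<in> borel_measurable borel"
    using lip by (intro borel_measurable_continuous_onI lipschitz_on_continuous_on)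
  then have fP: "f \<in> borel_measurable P" and fQ: "f \<in> borel_measurable Q"
    using assms(2,3) measurable_cong_sets by blast+
  have int_fst: "integrable \<gamma> (\<lambda>z. f (fst z))"
    using bounded measurable_comp[OF fst fP] by (intro integrable_const_bound[where B=B]) (auto simp: comp_def)
  have int_snd: "integrable \<gamma> (\<lambda>z. f (snd z))"
    using bounded measurable_comp[OF snd fQ] by (intro integrable_const_bound[where B=B]) (auto simp: comp_def)
  have "(\<integral>x. f x \<partial>Q) - (\<integral>x. f x \<partial>P) = (\<integral>z. f (snd z) - f (fst z) \<partial>\<gamma>)"
    using integral_distr[OF fst fP] integral_distr[OF snd fQ] \<gamma> int_fst int_snd
    by (simp add: coupling_def)
  also have "\<dots> \<le> (\<integral>z. \<bar>f (snd z) - f (fst z)\<bar> \<partial>\<gamma>)"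
    using int_fst int_snd by (intro integral_mono) auto
  finally have "ennreal ((\<integral>x. f x \<partial>Q) - (\<integral>x. f x \<partial>P))
      \<le> ennreal (\<integral>z. \<bar>f (snd z) - f (fst z)\<bar> \<partial>\<gamma>)"
    by (rule ennreal_leI)
  also have "\<dots> = (\<integral>\<^sup>+ z. ennreal \<bar>f (snd z) - f (fst z)\<bar> \<partial>\<gamma>)"
    using int_fst int_snd by (intro nn_integral_eq_integral[symmetric]) auto
  also have "\<dots> \<le> transport_cost \<gamma>"
    unfolding transport_cost_def
    using lipschitz_onD[OF lip] by (intro nn_integral_mono ennreal_leI) (simp add: dist_real_def abs_minus_commute)
  finally show ?thesis .
qed

lemma integral_diff_le_W1:
  fixes f :: "'a::metric_space \<Rightarrow> real"
  assumes "prob_space P" "sets P = sets borel" "finite_first_moment P"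
    and "prob_space Q" "sets Q = sets borel" "finite_first_moment Q"
    and bounded: "\<And>x. \<bar>f x\<bar> \<le> B" and lip: "L-lipschitz_on UNIV f"
  shows "(\<integral>x. f x \<partial>Q) - (\<integral>x. f x \<partial>P) \<le> L * W1 P Q"
proof (cases "L = 0")
  case True
  then have "f x = f y" for x y
    using lipschitz_onD[OF lip] by (simp add: dist_real_def)
  then obtain c where "f = (\<lambda>_. c)" by blast
  then show ?thesis
    using True prob_space.prob_space[OF assms(1)] prob_space.prob_space[OF assms(4)]
    by (simp add: measure_def)
next
  case False
  then have L: "L > 0"
    using lipschitz_on_nonneg[OF lip] by simp
  have "((\<integral>x. f x \<partial>Q) - (\<integral>x. f x \<partial>P)) / L = (\<integral>x. f x / L \<partial>Q) - (\<integral>x. f x / L \<partial>P)"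
    by (simp add: diff_divide_distrib)
  also have "\<dots> \<le> W1 P Q"
  proof (rule le_W1I[OF assms(1,4,3,6)])
    have "\<bar>f x / L\<bar> \<le> B / L" for x
      using bounded[of x] L by (simp add: divide_right_mono)
    moreover have "1-lipschitz_on UNIV (\<lambda>x. f x / L)"
      using lipschitz_on_cmult_real[OF lip, of "1 / L"] L by simp
    ultimately show "ennreal ((\<integral>x. f x / L \<partial>Q) - (\<integral>x. f x / L \<partial>P)) \<le> transport_cost \<gamma>"
      if "coupling P Q \<gamma>" for \<gamma>
      by (rule coupling_integral_diff_le_transport_cost[OF that assms(2,5)])
  qed
  finally show ?thesis
    using L by (simp add: divide_le_eq mult.commute)
qed

lemma lipschitz_on_abs_diff:
  fixes f g :: "'a::metric_space \<Rightarrow> real"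
  assumes "C-lipschitz_on U f" "D-lipschitz_on U g"
  shows "(C + D)-lipschitz_on U (\<lambda>x. \<bar>f x - g x\<bar>)"
proof -
  have "1-lipschitz_on ((\<lambda>x. f x - g x) ` U) abs"
    by (intro lipschitz_onI) (auto simp: dist_real_def)
  from lipschitz_on_compose2[OF lipschitz_on_diff[OF assms] this] show ?thesis
    by simp
qed

theorem lemma1:
  fixes \<mu>s \<mu>t :: "'a::metric_space measure"
    and H :: "('a \<Rightarrow> real) set" and K :: real
  assumes "prob_space \<mu>s" "sets \<mu>s = sets borel" "finite_first_moment \<mu>s"
    and "prob_space \<mu>t" "sets \<mu>t = sets borel" "finite_first_moment \<mu>t"
    and "\<forall>h\<in>H. \<forall>x. h x \<in> {0..1}"
    and "\<forall>h\<in>H. K-lipschitz_on UNIV h"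
    and "h \<in> H" "h' \<in> H"
  shows "eps \<mu>t h h' \<le> eps \<mu>s h h' + 2 * K * W1 \<mu>s \<mu>t"
proof -
  have "\<bar>\<bar>h x - h' x\<bar>\<bar> \<le> 1" for x
  proof -
    have "h x \<in> {0..1}" "h' x \<in> {0..1}"
      using assms(7,9,10) by auto
    then show ?thesis by auto
  qed
  moreover have "(2 * K)-lipschitz_on UNIV (\<lambda>x. \<bar>h x - h' x\<bar>)"
    using lipschitz_on_abs_diff[of K UNIV h K h'] assms(8-10) by simp
  ultimately have "(\<integral>x. \<bar>h x - h' x\<bar> \<partial>\<mu>t) - (\<integral>x. \<bar>h x - h' x\<bar> \<partial>\<mu>s) \<le> 2 * K * W1 \<mu>s \<mu>t"
    by (rule integral_diff_le_W1[OF assms(1-6)])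
  then show ?thesis
    unfolding eps_def by simp
qed

end
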